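(* Let $\boldsymbol{H}\in\mathbb{F}_q^{r\times m}$, $k\in\{2,\dots,r\}$, $i\in L\subseteq[m]$, and regard all entries of $\boldsymbol{H}_{[k]}^{L}$ as fixed except $h_{k,i}$. If $L$ is a circuit of $\boldsymbol{H}_{[k-1]}$, then there is exactly one value $c\in\mathbb{F}_q$ such that, when $h_{k,i}=c$, the columns of $\boldsymbol{H}_{[k]}$ indexed by $L$ are linearly dependent; for every $h_{k,i}\in\mathbb{F}_q\setminus\{c\}$, $L$ is an independent set of $\boldsymbol{H}_{[k]}$.
   Context: $\boldsymbol{H}_{[k]}$ is the submatrix of the first $k$ rows of $\boldsymbol{H}$ and $\boldsymbol{H}_{[k]}^{L}$ its submatrix with columns in $L$. For a matrix with columns indexed by $[m]$, $S\subseteq[m]$ is independent if the columns indexed by $S$ are linearly independent, dependent otherwise, and a circuit if it is dependent while every proper subset is independent. *)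

theory Defs
  imports Main
begin

text \<open>A matrix over a field is a function of (row, column) indices; rows and
columns are 1-based: rows 1..r, columns 1..m.  H_[k] is the submatrix of the
first k rows, i.e. rows 1..k.\<close>

definition col_indep :: "(nat \<Rightarrow> nat \<Rightarrow> 'a::field) \<Rightarrow> nat \<Rightarrow> nat set \<Rightarrow> bool" where
  "col_indep H k S \<longleftrightarrow>
     (\<forall>a :: nat \<Rightarrow> 'a. (\<forall>j\<in>{1..k}. (\<Sum>l\<in>S. a l * H j l) = 0) \<longrightarrow> (\<forall>l\<in>S. a l = 0))"

definition col_dep :: "(nat \<Rightarrow> nat \<Rightarrow> 'a::field) \<Rightarrow> nat \<Rightarrow> nat set \<Rightarrow> bool" where
  "col_dep H k S \<longleftrightarrow> \<not> col_indep H k S"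

definition col_circuit :: "(nat \<Rightarrow> nat \<Rightarrow> 'a::field) \<Rightarrow> nat \<Rightarrow> nat set \<Rightarrow> bool" where
  "col_circuit H k S \<longleftrightarrow> col_dep H k S \<and> (\<forall>T. T \<subset> S \<longrightarrow> col_indep H k T)"

definition set_entry :: "(nat \<Rightarrow> nat \<Rightarrow> 'a) \<Rightarrow> nat \<Rightarrow> nat \<Rightarrow> 'a \<Rightarrow> (nat \<Rightarrow> nat \<Rightarrow> 'a)" where
  "set_entry H k i c = H(k := (H k)(i := c))"

end

theory Submission
  imports Defs
begin

text \<open>A circuit L of H_[k-1] has, up to scaling, a unique linear relation a among its
  columns, and a is nonzero on every column of L. Adding row k keeps L dependent exactly
  when a is also orthogonal to that row, i.e. when
  \<open>a\<^sub>i h\<^sub>k\<^sub>i + \<Sum>\<^sub>l\<^sub>\<noteq>\<^sub>i a\<^sub>l h\<^sub>k\<^sub>l = 0\<close>; as \<open>a\<^sub>i \<noteq> 0\<close>, this linear equation in \<open>h\<^sub>k\<^sub>i\<close> has exactly one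
  root.\<close>

definition col_relation :: "(nat \<Rightarrow> nat \<Rightarrow> 'a::field) \<Rightarrow> nat \<Rightarrow> nat set \<Rightarrow> (nat \<Rightarrow> 'a) \<Rightarrow> bool" where
  "col_relation H k S a \<longleftrightarrow> (\<forall>j\<in>{1..k}. (\<Sum>l\<in>S. a l * H j l) = 0)"

lemma col_indep_iff_relation:
  "col_indep H k S \<longleftrightarrow> (\<forall>a. col_relation H k S a \<longrightarrow> (\<forall>l\<in>S. a l = 0))"
  by (simp add: col_indep_def col_relation_def)

lemma col_dep_iff_relation:
  "col_dep H k S \<longleftrightarrow> (\<exists>a. col_relation H k S a \<and> (\<exists>l\<in>S. a l \<noteq> 0))"
  by (auto simp: col_dep_def col_indep_iff_relation)

lemma col_relation_Suc:
  "col_relation H (Suc n) S a \<longleftrightarrow> col_relation H n S a \<and> (\<Sum>l\<in>S. a l * H (Suc n) l) = 0"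
  by (auto simp: col_relation_def atLeastAtMostSuc_conv)

lemma col_relation_cong_rows:
  assumes "\<forall>j\<in>{1..n}. H' j = H j"
  shows "col_relation H' n S a \<longleftrightarrow> col_relation H n S a"
  using assms by (simp add: col_relation_def)

lemma col_circuit_cong_rows:
  assumes "\<forall>j\<in>{1..n}. H' j = H j"
  shows "col_circuit H' n S \<longleftrightarrow> col_circuit H n S"
  by (simp add: col_circuit_def col_dep_def col_indep_iff_relation col_relation_cong_rows[OF assms])

lemma col_relation_diff_scaled:
  assumes "col_relation H n S a" and "col_relation H n S b"
  shows "col_relation H n S (\<lambda>l. b l - t * a l)"
proof -
  have "(\<Sum>l\<in>S. (b l - t * a l) * H j l) = (\<Sum>l\<in>S. b l * H j l) - t * (\<Sum>l\<in>S. a l * H j l)" for j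
    by (simp add: left_diff_distrib sum_subtractf sum_distrib_left mult.assoc)
  then show ?thesis using assms by (simp add: col_relation_def)
qed

lemma col_circuit_relation_zero:
  assumes "finite S" and "col_circuit H n S" and rel: "col_relation H n S e"
    and "l \<in> S" and "e l = 0"
  shows "\<forall>x\<in>S. e x = 0"
proof -
  have "col_indep H n (S - {l})"
    using assms(2,4) unfolding col_circuit_def by blast
  moreover have "(\<Sum>x\<in>S. e x * H j x) = (\<Sum>x\<in>S - {l}. e x * H j x)" for j
    using sum.remove[OF assms(1,4), of "\<lambda>x. e x * H j x"] \<open>e l = 0\<close> by simp
  then have "col_relation H n (S - {l}) e"
    using rel by (simp add: col_relation_def)
  ultimately have "\<forall>x\<in>S - {l}. e x = 0"
    unfolding col_indep_iff_relation by blast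
  then show ?thesis
    using \<open>e l = 0\<close> by blast
qed

lemma col_circuit_relation_proportional:
  assumes "finite S" and circ: "col_circuit H n S"
    and a: "col_relation H n S a" and b: "col_relation H n S b"
    and "i \<in> S" and "a i \<noteq> 0"
  shows "\<forall>l\<in>S. b l = b i / a i * a l"
proof -
  have "b i - b i / a i * a i = 0"
    using \<open>a i \<noteq> 0\<close> by simp
  then have "\<forall>l\<in>S. b l - b i / a i * a l = 0"
    by (rule col_circuit_relation_zero[OF \<open>finite S\<close> circ col_relation_diff_scaled[OF a b] \<open>i \<in> S\<close>])
  then show ?thesis
    by simp
qed

lemma col_circuit_dep_Suc_iff:
  assumes "finite S" and circ: "col_circuit H n S"
    and a: "col_relation H n S a" and "i \<in> S" and "a i \<noteq> 0"
  shows "col_dep H (Suc n) S \<longleftrightarrow> (\<Sum>l\<in>S. a l * H (Suc n) l) = 0"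
proof
  assume "col_dep H (Suc n) S"
  then obtain b l where b: "col_relation H (Suc n) S b" and "l \<in> S" "b l \<noteq> 0"
    by (auto simp: col_dep_iff_relation)
  define t where "t = b i / a i"
  have b_eq: "\<forall>l\<in>S. b l = t * a l"
    using col_circuit_relation_proportional[OF \<open>finite S\<close> circ a _ \<open>i \<in> S\<close> \<open>a i \<noteq> 0\<close>] b
    by (simp add: col_relation_Suc t_def)
  then have "t \<noteq> 0"
    using \<open>l \<in> S\<close> \<open>b l \<noteq> 0\<close> by auto
  have "t * (\<Sum>l\<in>S. a l * H (Suc n) l) = (\<Sum>l\<in>S. b l * H (Suc n) l)"
    by (simp add: sum_distrib_left mult.assoc b_eq)
  also have "\<dots> = 0"
    using b by (simp add: col_relation_Suc)
  finally show "(\<Sum>l\<in>S. a l * H (Suc n) l) = 0"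
    using \<open>t \<noteq> 0\<close> by simp
next
  assume "(\<Sum>l\<in>S. a l * H (Suc n) l) = 0"
  then show "col_dep H (Suc n) S"
    using a \<open>i \<in> S\<close> \<open>a i \<noteq> 0\<close> by (auto simp: col_dep_iff_relation col_relation_Suc)
qed

lemma set_entry_other_row: "j \<noteq> k \<Longrightarrow> set_entry H k i c j = H j"
  by (simp add: set_entry_def)

lemma set_entry_row_sum:
  assumes "finite S" and "i \<in> S"
  shows "(\<Sum>l\<in>S. a l * set_entry H k i c k l) = a i * c + (\<Sum>l\<in>S - {i}. a l * H k l)"
  using sum.remove[OF assms, of "\<lambda>l. a l * set_entry H k i c k l"]
  by (simp add: set_entry_def)

lemma col_circuit_set_entry_dep_iff:
  assumes "finite S" and circ: "col_circuit H n S"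
    and a: "col_relation H n S a" and "i \<in> S" and "a i \<noteq> 0"
  shows "col_dep (set_entry H (Suc n) i c) (Suc n) S
    \<longleftrightarrow> a i * c + (\<Sum>l\<in>S - {i}. a l * H (Suc n) l) = 0"
proof -
  have rows: "\<forall>j\<in>{1..n}. set_entry H (Suc n) i c j = H j"
    by (simp add: set_entry_other_row)
  have circ_c: "col_circuit (set_entry H (Suc n) i c) n S"
    using circ by (simp add: col_circuit_cong_rows[OF rows])
  have a_c: "col_relation (set_entry H (Suc n) i c) n S a"
    using a by (simp add: col_relation_cong_rows[OF rows])
  show ?thesis
    using col_circuit_dep_Suc_iff[OF \<open>finite S\<close> circ_c a_c \<open>i \<in> S\<close> \<open>a i \<noteq> 0\<close>]
    by (simp add: set_entry_row_sum[OF \<open>finite S\<close> \<open>i \<in> S\<close>])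
qed

theorem proposition3:
  fixes H :: "nat \<Rightarrow> nat \<Rightarrow> 'a::{finite,field}" and r m k i :: nat and L :: "nat set"
  assumes "2 \<le> k" and "k \<le> r"
    and "L \<subseteq> {1..m}" and "i \<in> L"
    and "col_circuit H (k - 1) L"
  shows "\<exists>!c. col_dep (set_entry H k i c) k L \<and>
               (\<forall>d. d \<noteq> c \<longrightarrow> col_indep (set_entry H k i d) k L)"
proof -
  obtain n where k: "k = Suc n"
    using assms(1) by (cases k) auto
  have circ: "col_circuit H n L" and fin: "finite L"
    using assms(3,5) finite_subset by (auto simp: k)
  obtain a where a: "col_relation H n L a" and "\<exists>l\<in>L. a l \<noteq> 0"
    using circ by (auto simp: col_circuit_def col_dep_iff_relation)
  then have "a i \<noteq> 0"
    using col_circuit_relation_zero[OF fin circ a assms(4)] by blast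
  define s where "s = (\<Sum>l\<in>L - {i}. a l * H k l)"
  have "col_dep (set_entry H k i d) k L \<longleftrightarrow> d = - s / a i" for d
    using col_circuit_set_entry_dep_iff[OF fin circ a assms(4) \<open>a i \<noteq> 0\<close>, of d] \<open>a i \<noteq> 0\<close>
    by (auto simp: k s_def field_simps add_eq_0_iff)
  then show ?thesis
    unfolding col_dep_def by blast
qed

end
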